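(* Let $\boldsymbol\gamma=(\gamma_1,\dots,\gamma_d,\gamma_{d+1})\in\mathbb R^{d+1}$ with $\gamma_i=-1$ for some $i$, $1\le i\le d$, and let $\mathbf n\in\mathbb N_0^d$ with $n_i\ge1$. Then $$P_{\mathbf n}^{(\gamma,\gamma_{d+1})}(x)=-(|\mathbf n|+\gamma_{d+1})\,x_i\,P_{\mathbf n-e_i}^{(\gamma+2e_i,\gamma_{d+1})}(x),$$ where $\gamma=(\gamma_1,\dots,\gamma_d)$.
   Context: $|x|=x_1+\dots+x_d$, $|\mathbf n|=n_1+\dots+n_d$, $e_i$ the standard basis of $\mathbb R^d$. For $(\gamma,\gamma_{d+1})\in\mathbb R^{d+1}$ and $\mathbf n\in\mathbb N_0^d$, on the interior of $T^d=\{x_i\ge0,|x|\le1\}$, $P_{\mathbf n}^{(\gamma,\gamma_{d+1})}(x)=x_1^{-\gamma_1}\cdots x_d^{-\gamma_d}(1-|x|)^{-\gamma_{d+1}}\frac{\partial^{|\mathbf n|}}{\partial x_1^{n_1}\cdots\partial x_d^{n_d}}\big[x_1^{\gamma_1+n_1}\cdots x_d^{\gamma_d+n_d}(1-|x|)^{\gamma_{d+1}+|\mathbf n|}\big]$. *)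

theory Defs
  imports "HOL-Analysis.Analysis"
begin

text \<open>Points of R^d are represented as functions nat => real; only the coordinates
  1..d are used. Multi-indices are functions nat => nat, again only 1..d used.\<close>

definition pdiff :: "nat \<Rightarrow> ((nat \<Rightarrow> real) \<Rightarrow> real) \<Rightarrow> (nat \<Rightarrow> real) \<Rightarrow> real" where
  "pdiff i f = (\<lambda>x. deriv (\<lambda>t. f (x(i := t))) (x i))"

fun mixed_diff :: "nat \<Rightarrow> (nat \<Rightarrow> nat) \<Rightarrow> ((nat \<Rightarrow> real) \<Rightarrow> real) \<Rightarrow> (nat \<Rightarrow> real) \<Rightarrow> real" where
  "mixed_diff 0 n f = f"
| "mixed_diff (Suc k) n f = mixed_diff k n ((pdiff (Suc k) ^^ n (Suc k)) f)"

definition simplex_interior :: "nat \<Rightarrow> (nat \<Rightarrow> real) set" where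
  "simplex_interior d = {x. (\<forall>i\<in>{1..d}. 0 < x i) \<and> (\<Sum>i=1..d. x i) < 1}"

text \<open>The Rodrigues-type simplex Jacobi polynomial P_n^(gamma, g)(x), gamma = (gamma_1..gamma_d),
  g = gamma_{d+1}.\<close>
definition simplex_P :: "nat \<Rightarrow> (nat \<Rightarrow> real) \<Rightarrow> real \<Rightarrow> (nat \<Rightarrow> nat) \<Rightarrow> (nat \<Rightarrow> real) \<Rightarrow> real" where
  "simplex_P d \<gamma> g n x =
     (\<Prod>i=1..d. x i powr (- \<gamma> i)) * (1 - (\<Sum>i=1..d. x i)) powr (- g) *
     mixed_diff d n
       (\<lambda>y. (\<Prod>i=1..d. y i powr (\<gamma> i + real (n i))) *
            (1 - (\<Sum>i=1..d. y i)) powr (g + real (\<Sum>i=1..d. n i))) x"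

end

theory Submission
  imports Defs
begin

text \<open>
  With gamma_i = -1 the weight of P_n^(gamma,g) is x_i^m G(x), m = n_i - 1, where G involves x_i
  only through (1 - |x|)^a, a = g + |n|; the weight of P_(n-e_i)^(gamma+2e_i,g) is x_i^(m+1) K(x)
  with K = G / (1 - |x|), so D G = -a K for D = d/dx_i. The one-variable identity
  x D^(m+1) (x^m G) = D^m (x^(m+1) D G) turns x_i D^(m+1) of the first weight into -a D^m of the
  second. The remaining partial derivatives commute with D and with multiplication by powers
  of x_i; this is justified on finite sums of generalised monomials c \<Prod> y_k^(e_k) (1 - |y|)^b,
  a class closed under partial differentiation on the open simplex.
\<close>

type_synonym monomial = "real \<times> (nat \<Rightarrow> real) \<times> real"

fun mono_eval :: "nat \<Rightarrow> monomial \<Rightarrow> (nat \<Rightarrow> real) \<Rightarrow> real" where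
  "mono_eval d (c, e, b) y = c * (\<Prod>k=1..d. y k powr e k) * (1 - (\<Sum>k=1..d. y k)) powr b"

definition poly_eval :: "nat \<Rightarrow> monomial list \<Rightarrow> (nat \<Rightarrow> real) \<Rightarrow> real" where
  "poly_eval d L y = (\<Sum>m\<leftarrow>L. mono_eval d m y)"

fun mono_pdiff :: "nat \<Rightarrow> nat \<Rightarrow> monomial \<Rightarrow> monomial list" where
  "mono_pdiff d j (c, e, b) =
     (if j \<in> {1..d} then [(c * e j, e(j := e j - 1), b), (- c * b, e, b - 1)] else [])"

definition poly_pdiff :: "nat \<Rightarrow> nat \<Rightarrow> monomial list \<Rightarrow> monomial list" where
  "poly_pdiff d j L = concat (map (mono_pdiff d j) L)"

fun mono_scale :: "real \<Rightarrow> monomial \<Rightarrow> monomial" where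
  "mono_scale a (c, e, b) = (a * c, e, b)"

fun mono_shift :: "nat \<Rightarrow> real \<Rightarrow> monomial \<Rightarrow> monomial" where
  "mono_shift i p (c, e, b) = (c, e(i := e i + p), b)"

lemma poly_eval_Nil [simp]: "poly_eval d [] y = 0"
  by (simp add: poly_eval_def)

lemma poly_eval_Cons [simp]: "poly_eval d (m # L) y = mono_eval d m y + poly_eval d L y"
  by (simp add: poly_eval_def)

lemma poly_eval_append [simp]: "poly_eval d (L @ M) y = poly_eval d L y + poly_eval d M y"
  by (simp add: poly_eval_def)

lemma poly_pdiff_Nil [simp]: "poly_pdiff d j [] = []"
  by (simp add: poly_pdiff_def)

lemma poly_pdiff_Cons [simp]: "poly_pdiff d j (m # L) = mono_pdiff d j m @ poly_pdiff d j L"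
  by (simp add: poly_pdiff_def)

lemma poly_pdiff_append [simp]: "poly_pdiff d j (L @ M) = poly_pdiff d j L @ poly_pdiff d j M"
  by (simp add: poly_pdiff_def)

lemma poly_eval_scale: "poly_eval d (map (mono_scale a) L) y = a * poly_eval d L y"
proof (induction L)
  case (Cons m L)
  then show ?case by (cases m) (simp add: algebra_simps)
qed simp

lemma mono_eval_shift:
  assumes "i \<in> {1..d}" "y \<in> simplex_interior d"
  shows "mono_eval d (mono_shift i p m) y = y i powr p * mono_eval d m y"
proof -
  obtain c e b where m: "m = (c, e, b)" by (cases m) auto
  have "0 < y i" using assms by (auto simp: simplex_interior_def)
  moreover have "(\<Prod>k\<in>{1..d}-{i}. y k powr (e(i := e i + p)) k) = (\<Prod>k\<in>{1..d}-{i}. y k powr e k)"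
    by (rule prod.cong) auto
  ultimately have "(\<Prod>k=1..d. y k powr (e(i := e i + p)) k) = y i powr p * (\<Prod>k=1..d. y k powr e k)"
    using assms(1) by (simp add: prod.remove powr_add algebra_simps)
  then show ?thesis by (simp add: m)
qed

lemma poly_eval_shift:
  assumes "i \<in> {1..d}" "y \<in> simplex_interior d"
  shows "poly_eval d (map (mono_shift i p) L) y = y i powr p * poly_eval d L y"
  by (induction L) (simp_all add: mono_eval_shift[OF assms] algebra_simps)

lemma mono_eval_split:
  assumes "i \<in> {1..d}" "y \<in> simplex_interior d"
  shows "mono_eval d (c, e, b) y = y i powr e i * mono_eval d (c, e(i := 0), b) y"
  using mono_eval_shift[OF assms, of "e i" "(c, e(i := 0), b)"] by simp

lemma eventually_upd_simplex_interior:
  assumes "y \<in> simplex_interior d"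
  shows "\<forall>\<^sub>F t in nhds (y j). y(j := t) \<in> simplex_interior d"
proof (cases "j \<in> {1..d}")
  case True
  define S where "S = (\<Sum>k\<in>{1..d}-{j}. y k)"
  have sum_upd: "(\<Sum>k=1..d. (y(j := t)) k) = t + S" for t
    using True by (simp add: S_def sum.remove)
  have "0 < y j" "y j < 1 - S"
    using assms True sum_upd[of "y j"] by (auto simp: simplex_interior_def)
  then have "\<forall>\<^sub>F t in nhds (y j). 0 < t \<and> t < 1 - S"
    by (intro eventually_conj order_tendstoD[OF filterlim_ident])
  then show ?thesis
    by eventually_elim (use assms sum_upd in \<open>auto simp: simplex_interior_def\<close>)
next
  case False
  then have "y(j := t) \<in> simplex_interior d" for t
    using assms by (auto simp: simplex_interior_def)
  then show ?thesis by simp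
qed

lemma mono_eval_DERIV:
  assumes y: "y \<in> simplex_interior d"
  shows "((\<lambda>t. mono_eval d m (y(j := t))) has_real_derivative poly_eval d (mono_pdiff d j m) y) (at (y j))"
proof -
  obtain c e b where m: "m = (c, e, b)" by (cases m) auto
  show ?thesis
  proof (cases "j \<in> {1..d}")
    case False
    have "mono_eval d m (y(j := t)) = mono_eval d m y" for t
    proof -
      have "(\<Prod>k=1..d. (y(j := t)) k powr e k) = (\<Prod>k=1..d. y k powr e k)"
        by (rule prod.cong) (use False in auto)
      moreover have "(\<Sum>k=1..d. (y(j := t)) k) = (\<Sum>k=1..d. y k)"
        by (rule sum.cong) (use False in auto)
      ultimately show ?thesis by (simp add: m)
    qed
    moreover have "poly_eval d (mono_pdiff d j m) y = 0"
      by (simp only: m mono_pdiff.simps if_not_P[OF False] poly_eval_Nil)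
    ultimately show ?thesis by simp
  next
    case True
    define S where "S = (\<Sum>k\<in>{1..d}-{j}. y k)"
    define P where "P = (\<Prod>k\<in>{1..d}-{j}. y k powr e k)"
    have sum_upd: "(\<Sum>k=1..d. (y(j := t)) k) = t + S" for t
      using True by (simp add: S_def sum.remove)
    have pos: "0 < y j" "0 < 1 - (y j + S)"
      using y True sum_upd[of "y j"] by (auto simp: simplex_interior_def)
    have "(\<Prod>k=1..d. (y(j := t)) k powr e k) = t powr e j * P" for t
      using True by (simp add: P_def prod.remove)
    then have fn: "mono_eval d m (y(j := t)) = c * (t powr e j * P) * (1 - (t + S)) powr b" for t
      by (simp only: m mono_eval.simps sum_upd)
    have "(\<Prod>k\<in>{1..d}-{j}. y k powr (e(j := e j - 1)) k) = P"
      unfolding P_def by (rule prod.cong) auto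
    then have E: "poly_eval d (mono_pdiff d j m) y =
        c * ((e j * y j powr (e j - 1)) * P) * (1 - (y j + S)) powr b +
        c * (y j powr e j * P) * (b * (1 - (y j + S)) powr (b - 1) * (-1))"
      using True sum_upd[of "y j"] by (simp add: m P_def prod.remove algebra_simps)
    have "((\<lambda>t. (1 - (t + S)) powr b) has_real_derivative
        b * (1 - (y j + S)) powr (b - of_nat 1) * (-1)) (at (y j))"
      by (rule DERIV_fun_powr) (use pos in \<open>auto intro!: derivative_eq_intros\<close>)
    from DERIV_mult[OF DERIV_cmult[OF DERIV_mult[OF has_real_derivative_powr[OF pos(1)]
          DERIV_const[of P]]] this, of c]
    show ?thesis
      unfolding fn E by (rule DERIV_cong) (simp add: algebra_simps)
  qed
qed

lemma poly_eval_DERIV: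
  assumes "y \<in> simplex_interior d"
  shows "((\<lambda>t. poly_eval d L (y(j := t))) has_real_derivative poly_eval d (poly_pdiff d j L) y) (at (y j))"
proof (induction L)
  case (Cons m L)
  show ?case using DERIV_add[OF mono_eval_DERIV[OF assms, of m j] Cons] by (simp add: fun_upd_def)
qed simp

definition simplex_poly :: "nat \<Rightarrow> ((nat \<Rightarrow> real) \<Rightarrow> real) \<Rightarrow> bool" where
  "simplex_poly d f \<longleftrightarrow> (\<exists>L. \<forall>y\<in>simplex_interior d. f y = poly_eval d L y)"

lemma DERIV_agrees_poly_eval:
  assumes L: "\<forall>z\<in>simplex_interior d. f z = poly_eval d L z" and y: "y \<in> simplex_interior d"
  shows "((\<lambda>t. f (y(j := t))) has_real_derivative poly_eval d (poly_pdiff d j L) y) (at (y j))"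
proof -
  have "\<forall>\<^sub>F t in nhds (y j). f (y(j := t)) = poly_eval d L (y(j := t))"
    using eventually_upd_simplex_interior[OF y, of j] by eventually_elim (use L in auto)
  then show ?thesis
    by (subst DERIV_cong_ev[OF refl _ refl]) (auto intro: poly_eval_DERIV[OF y])
qed

lemma pdiff_eq_poly_eval:
  assumes "\<forall>z\<in>simplex_interior d. f z = poly_eval d L z" "y \<in> simplex_interior d"
  shows "pdiff j f y = poly_eval d (poly_pdiff d j L) y"
  unfolding pdiff_def using DERIV_imp_deriv[OF DERIV_agrees_poly_eval[OF assms]] by simp

lemma simplex_poly_mono_eval: "simplex_poly d (mono_eval d m)"
  unfolding simplex_poly_def by (rule exI[of _ "[m]"]) simp

lemma simplex_poly_pdiff: "simplex_poly d f \<Longrightarrow> simplex_poly d (pdiff j f)"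
  unfolding simplex_poly_def using pdiff_eq_poly_eval by blast

lemma simplex_poly_cmult: "simplex_poly d f \<Longrightarrow> simplex_poly d (\<lambda>z. a * f z)"
  unfolding simplex_poly_def by (metis poly_eval_scale)

lemma simplex_poly_add: "simplex_poly d f \<Longrightarrow> simplex_poly d g \<Longrightarrow> simplex_poly d (\<lambda>z. f z + g z)"
  unfolding simplex_poly_def by (metis poly_eval_append)

lemma simplex_poly_xpow:
  "i \<in> {1..d} \<Longrightarrow> simplex_poly d f \<Longrightarrow> simplex_poly d (\<lambda>z. z i powr p * f z)"
  unfolding simplex_poly_def by (metis poly_eval_shift)

lemma simplex_poly_DERIV:
  assumes "simplex_poly d f" "y \<in> simplex_interior d"
  shows "((\<lambda>t. f (y(j := t))) has_real_derivative pdiff j f y) (at (y j))"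
proof -
  obtain L where "\<forall>z\<in>simplex_interior d. f z = poly_eval d L z"
    using assms(1) simplex_poly_def by blast
  from DERIV_agrees_poly_eval[OF this assms(2)] pdiff_eq_poly_eval[OF this assms(2)]
  show ?thesis by simp
qed

lemma pdiff_cmult:
  assumes "simplex_poly d f" "y \<in> simplex_interior d"
  shows "pdiff j (\<lambda>z. a * f z) y = a * pdiff j f y"
  unfolding pdiff_def
  using DERIV_imp_deriv[OF DERIV_cmult[OF simplex_poly_DERIV[OF assms, of j], of a]]
  by (simp add: pdiff_def)

lemma pdiff_add:
  assumes "simplex_poly d f" "simplex_poly d g" "y \<in> simplex_interior d"
  shows "pdiff j (\<lambda>z. f z + g z) y = pdiff j f y + pdiff j g y"
  unfolding pdiff_def
  using DERIV_imp_deriv[OF DERIV_add[OF simplex_poly_DERIV[OF assms(1,3), of j]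
        simplex_poly_DERIV[OF assms(2,3), of j]]]
  by (simp add: pdiff_def)

lemma pdiff_xpow_other:
  assumes "j \<noteq> i" "simplex_poly d f" "y \<in> simplex_interior d"
  shows "pdiff j (\<lambda>z. z i powr p * f z) y = y i powr p * pdiff j f y"
  using pdiff_cmult[OF assms(2,3), of j "y i powr p"] assms(1) by (simp add: pdiff_def)

lemma pdiff_xpow_same:
  assumes i: "i \<in> {1..d}" and f: "simplex_poly d f" and y: "y \<in> simplex_interior d"
  shows "pdiff i (\<lambda>z. z i powr p * f z) y = p * y i powr (p - 1) * f y + y i powr p * pdiff i f y"
proof -
  have "0 < y i" using i y by (auto simp: simplex_interior_def)
  then have "((\<lambda>t. t powr p * f (y(i := t))) has_real_derivative
      p * y i powr (p - 1) * f y + y i powr p * pdiff i f y) (at (y i))"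
    by (rule DERIV_cong[OF DERIV_mult[OF has_real_derivative_powr simplex_poly_DERIV[OF f y]]])
      (simp add: algebra_simps)
  then show ?thesis unfolding pdiff_def by (simp add: DERIV_imp_deriv)
qed

lemma pdiff_cong:
  assumes "simplex_poly d f" "\<And>z. z \<in> simplex_interior d \<Longrightarrow> f z = g z" "y \<in> simplex_interior d"
  shows "pdiff j f y = pdiff j g y"
proof -
  obtain L where L: "\<forall>z\<in>simplex_interior d. f z = poly_eval d L z"
    using assms(1) simplex_poly_def by blast
  moreover have "\<forall>z\<in>simplex_interior d. g z = poly_eval d L z"
    using L assms(2) by auto
  ultimately show ?thesis using pdiff_eq_poly_eval[OF _ assms(3)] by metis
qed

lemma mono_pdiff_outside: "j \<notin> {1..d} \<Longrightarrow> mono_pdiff d j m = []"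
  by (cases m) (simp only: mono_pdiff.simps if_not_P if_False)

lemma poly_pdiff_outside: "j \<notin> {1..d} \<Longrightarrow> poly_pdiff d j L = []"
  by (induction L) (simp_all add: mono_pdiff_outside)

lemma poly_eval_mono_pdiff_commute:
  "poly_eval d (poly_pdiff d i (mono_pdiff d j m)) y = poly_eval d (poly_pdiff d j (mono_pdiff d i m)) y"
proof -
  obtain c e b where m: "m = (c, e, b)" by (cases m) auto
  consider "i = j" | "i \<notin> {1..d}" | "j \<notin> {1..d}" | "i \<noteq> j" "i \<in> {1..d}" "j \<in> {1..d}"
    by blast
  then show ?thesis
  proof cases
    case 4
    then show ?thesis
      by (simp only: m mono_pdiff.simps if_P poly_pdiff_Cons poly_pdiff_Nil append_Nil2
          poly_eval_append poly_eval_Cons poly_eval_Nil fun_upd_same fun_upd_other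
          fun_upd_twist[OF \<open>i \<noteq> j\<close>] mono_eval.simps not_sym[OF \<open>i \<noteq> j\<close>])
        (simp add: algebra_simps)
  qed (simp_all add: mono_pdiff_outside poly_pdiff_outside)
qed

lemma poly_eval_poly_pdiff_commute:
  "poly_eval d (poly_pdiff d i (poly_pdiff d j L)) y = poly_eval d (poly_pdiff d j (poly_pdiff d i L)) y"
  by (induction L) (simp_all add: poly_eval_mono_pdiff_commute)

lemma pdiff_commute:
  assumes "simplex_poly d f" "y \<in> simplex_interior d"
  shows "pdiff i (pdiff j f) y = pdiff j (pdiff i f) y"
proof -
  obtain L where L: "\<forall>z\<in>simplex_interior d. f z = poly_eval d L z"
    using assms(1) simplex_poly_def by blast
  have "\<forall>z\<in>simplex_interior d. pdiff k f z = poly_eval d (poly_pdiff d k L) z" for k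
    using pdiff_eq_poly_eval[OF L] by blast
  then show ?thesis
    using pdiff_eq_poly_eval[OF _ assms(2)] poly_eval_poly_pdiff_commute by metis
qed

definition admissible_op :: "nat \<Rightarrow> (((nat \<Rightarrow> real) \<Rightarrow> real) \<Rightarrow> ((nat \<Rightarrow> real) \<Rightarrow> real)) \<Rightarrow> bool" where
  "admissible_op d Op \<longleftrightarrow> (\<forall>f. simplex_poly d f \<longrightarrow> simplex_poly d (Op f) \<and>
     (\<forall>g. (\<forall>z\<in>simplex_interior d. f z = g z) \<longrightarrow> (\<forall>z\<in>simplex_interior d. Op f z = Op g z)) \<and>
     (\<forall>a. \<forall>z\<in>simplex_interior d. Op (\<lambda>y. a * f y) z = a * Op f z) \<and>
     (\<forall>i. \<forall>z\<in>simplex_interior d. pdiff i (Op f) z = Op (pdiff i f) z))"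

definition commutes_xpow :: "nat \<Rightarrow> nat \<Rightarrow> (((nat \<Rightarrow> real) \<Rightarrow> real) \<Rightarrow> ((nat \<Rightarrow> real) \<Rightarrow> real)) \<Rightarrow> bool" where
  "commutes_xpow d i Op \<longleftrightarrow> (\<forall>f p. simplex_poly d f \<longrightarrow>
     (\<forall>z\<in>simplex_interior d. Op (\<lambda>y. y i powr p * f y) z = z i powr p * Op f z))"

context
  fixes d :: nat and Op :: "((nat \<Rightarrow> real) \<Rightarrow> real) \<Rightarrow> ((nat \<Rightarrow> real) \<Rightarrow> real)"
  assumes Op: "admissible_op d Op"
begin

lemma admissible_op_simplex_poly: "simplex_poly d f \<Longrightarrow> simplex_poly d (Op f)"
  using Op unfolding admissible_op_def by blast

lemma admissible_op_cong:
  "simplex_poly d f \<Longrightarrow> (\<And>z. z \<in> simplex_interior d \<Longrightarrow> f z = g z) \<Longrightarrow> z \<in> simplex_interior d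
    \<Longrightarrow> Op f z = Op g z"
  using Op unfolding admissible_op_def by blast

lemma admissible_op_cmult:
  "simplex_poly d f \<Longrightarrow> z \<in> simplex_interior d \<Longrightarrow> Op (\<lambda>y. a * f y) z = a * Op f z"
  using Op unfolding admissible_op_def by blast

lemma admissible_op_pdiff_commute:
  "simplex_poly d f \<Longrightarrow> z \<in> simplex_interior d \<Longrightarrow> pdiff i (Op f) z = Op (pdiff i f) z"
  using Op unfolding admissible_op_def by blast

end

lemma commutes_xpowD:
  "commutes_xpow d i Op \<Longrightarrow> simplex_poly d f \<Longrightarrow> z \<in> simplex_interior d
    \<Longrightarrow> Op (\<lambda>y. y i powr p * f y) z = z i powr p * Op f z"
  unfolding commutes_xpow_def by blast

lemma admissible_op_id: "admissible_op d id"
  unfolding admissible_op_def by simp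

lemma commutes_xpow_id: "commutes_xpow d i id"
  unfolding commutes_xpow_def by simp

lemma admissible_op_pdiff: "admissible_op d (pdiff j)"
  unfolding admissible_op_def
  using simplex_poly_pdiff pdiff_cong pdiff_cmult pdiff_commute by blast

lemma commutes_xpow_pdiff: "j \<noteq> i \<Longrightarrow> commutes_xpow d i (pdiff j)"
  unfolding commutes_xpow_def using pdiff_xpow_other by blast

lemma admissible_op_comp:
  assumes A: "admissible_op d A" and B: "admissible_op d B"
  shows "admissible_op d (A \<circ> B)"
  unfolding admissible_op_def comp_apply
proof (intro allI impI conjI ballI)
  fix f assume f: "simplex_poly d f"
  then have Bf: "simplex_poly d (B f)" by (rule admissible_op_simplex_poly[OF B])
  then show "simplex_poly d (A (B f))" by (rule admissible_op_simplex_poly[OF A])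
  fix g z assume "\<forall>z\<in>simplex_interior d. f z = g z" "z \<in> simplex_interior d"
  then show "A (B f) z = A (B g) z"
    by (auto intro!: admissible_op_cong[OF A Bf] admissible_op_cong[OF B f])
next
  fix f a z assume f: "simplex_poly d f" and z: "z \<in> simplex_interior d"
  have "A (B (\<lambda>y. a * f y)) z = A (\<lambda>y. a * B f y) z"
    by (rule admissible_op_cong[OF A admissible_op_simplex_poly[OF B simplex_poly_cmult[OF f]] _ z])
      (rule admissible_op_cmult[OF B f])
  also have "\<dots> = a * A (B f) z"
    by (rule admissible_op_cmult[OF A admissible_op_simplex_poly[OF B f] z])
  finally show "A (B (\<lambda>y. a * f y)) z = a * A (B f) z" .
next
  fix f i z assume f: "simplex_poly d f" and z: "z \<in> simplex_interior d"
  have Bf: "simplex_poly d (B f)" by (rule admissible_op_simplex_poly[OF B f])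
  have "pdiff i (A (B f)) z = A (pdiff i (B f)) z"
    by (rule admissible_op_pdiff_commute[OF A Bf z])
  also have "\<dots> = A (B (pdiff i f)) z"
    by (rule admissible_op_cong[OF A simplex_poly_pdiff[OF Bf] _ z])
      (rule admissible_op_pdiff_commute[OF B f])
  finally show "pdiff i (A (B f)) z = A (B (pdiff i f)) z" .
qed

lemma commutes_xpow_comp:
  assumes i: "i \<in> {1..d}"
    and A: "admissible_op d A" "commutes_xpow d i A"
    and B: "admissible_op d B" "commutes_xpow d i B"
  shows "commutes_xpow d i (A \<circ> B)"
  unfolding commutes_xpow_def comp_apply
proof (intro allI impI ballI)
  fix f p z assume f: "simplex_poly d f" and z: "z \<in> simplex_interior d"
  have "A (B (\<lambda>y. y i powr p * f y)) z = A (\<lambda>y. y i powr p * B f y) z"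
    by (rule admissible_op_cong[OF A(1) admissible_op_simplex_poly[OF B(1) simplex_poly_xpow[OF i f]] _ z])
      (rule commutes_xpowD[OF B(2) f])
  also have "\<dots> = z i powr p * A (B f) z"
    by (rule commutes_xpowD[OF A(2) admissible_op_simplex_poly[OF B(1) f] z])
  finally show "A (B (\<lambda>y. y i powr p * f y)) z = z i powr p * A (B f) z" .
qed

lemma admissible_op_funpow: "admissible_op d Op \<Longrightarrow> admissible_op d (Op ^^ m)"
  by (induction m) (simp_all add: admissible_op_id admissible_op_comp)

lemma commutes_xpow_funpow:
  "i \<in> {1..d} \<Longrightarrow> admissible_op d Op \<Longrightarrow> commutes_xpow d i Op \<Longrightarrow> commutes_xpow d i (Op ^^ m)"
  by (induction m) (simp_all add: commutes_xpow_id commutes_xpow_comp admissible_op_funpow)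

lemma mixed_diff_Suc_comp: "mixed_diff (Suc k) n = mixed_diff k n \<circ> (pdiff (Suc k) ^^ n (Suc k))"
  by auto

lemma admissible_op_mixed_diff: "admissible_op d (mixed_diff k n)"
proof (induction k)
  case 0
  show ?case by (simp add: admissible_op_def)
next
  case (Suc k)
  then show ?case
    unfolding mixed_diff_Suc_comp
    by (intro admissible_op_comp admissible_op_funpow admissible_op_pdiff)
qed

lemma commutes_xpow_mixed_diff:
  assumes "i \<in> {1..d}" "n i = 0"
  shows "commutes_xpow d i (mixed_diff k n)"
proof (induction k)
  case 0
  show ?case by (simp add: commutes_xpow_def)
next
  case (Suc k)
  have "commutes_xpow d i (pdiff (Suc k) ^^ n (Suc k))"
    using assms by (cases "Suc k = i")
      (simp_all add: commutes_xpow_id commutes_xpow_funpow admissible_op_pdiff commutes_xpow_pdiff)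
  with Suc show ?case
    unfolding mixed_diff_Suc_comp
    by (intro commutes_xpow_comp assms(1) admissible_op_mixed_diff admissible_op_funpow admissible_op_pdiff)
qed

lemma funpow_Suc_apply: "(f ^^ Suc m) x = (f ^^ m) (f x)"
  by (simp add: funpow_Suc_right del: funpow.simps)

lemma funpow_pdiff_admissible_op_commute:
  assumes "admissible_op d Op" "simplex_poly d f" "z \<in> simplex_interior d"
  shows "(pdiff i ^^ a) (Op f) z = Op ((pdiff i ^^ a) f) z"
  using assms(2,3)
proof (induction a arbitrary: f)
  case (Suc a)
  have "(pdiff i ^^ Suc a) (Op f) z = (pdiff i ^^ a) (Op (pdiff i f)) z"
    unfolding funpow_Suc_apply
    using Suc.prems admissible_op_simplex_poly[OF assms(1)] admissible_op_pdiff_commute[OF assms(1)]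
    by (intro admissible_op_cong[OF admissible_op_funpow[OF admissible_op_pdiff]] simplex_poly_pdiff)
  also have "\<dots> = Op ((pdiff i ^^ Suc a) f) z"
    unfolding funpow_Suc_apply using Suc simplex_poly_pdiff by blast
  finally show ?case .
qed simp

lemma mixed_diff_cong_index:
  "(\<And>j. j \<in> {1..k} \<Longrightarrow> n j = n' j) \<Longrightarrow> mixed_diff k n f = mixed_diff k n' f"
  by (induction k arbitrary: f) auto

lemma mixed_diff_pdiff_first:
  assumes "i \<in> {1..k}" "simplex_poly d f" "z \<in> simplex_interior d"
  shows "mixed_diff k n f z = mixed_diff k (n(i := 0)) ((pdiff i ^^ n i) f) z"
  using assms
proof (induction k arbitrary: f)
  case (Suc k)
  show ?case
  proof (cases "i = Suc k")
    case True
    have "mixed_diff k n = mixed_diff k (n(i := 0))"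
      using True by (intro ext mixed_diff_cong_index) auto
    with True show ?thesis by (simp add: fun_upd_def)
  next
    case False
    define j where "j = Suc k"
    have "mixed_diff (Suc k) n f z = mixed_diff k (n(i := 0)) ((pdiff i ^^ n i) ((pdiff j ^^ n j) f)) z"
      using Suc False
      by (simp add: j_def fun_upd_def simplex_poly_pdiff admissible_op_simplex_poly
          admissible_op_funpow admissible_op_pdiff)
    also have "\<dots> = mixed_diff k (n(i := 0)) ((pdiff j ^^ n j) ((pdiff i ^^ n i) f)) z"
    proof (rule admissible_op_cong[OF admissible_op_mixed_diff _ _ \<open>z \<in> simplex_interior d\<close>])
      have pdiffs: "admissible_op d (pdiff l ^^ a)" for l a
        by (intro admissible_op_funpow admissible_op_pdiff)
      show "simplex_poly d ((pdiff i ^^ n i) ((pdiff j ^^ n j) f))"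
        using Suc.prems by (intro admissible_op_simplex_poly[OF pdiffs])
      show "(pdiff i ^^ n i) ((pdiff j ^^ n j) f) y = (pdiff j ^^ n j) ((pdiff i ^^ n i) f) y"
        if "y \<in> simplex_interior d" for y
        using Suc.prems that by (intro funpow_pdiff_admissible_op_commute[OF pdiffs])
    qed
    finally show ?thesis using False by (simp add: j_def fun_upd_def)
  qed
qed simp

lemma pdiff_xpow_Suc:
  assumes i: "i \<in> {1..d}" and "simplex_poly d G" "z \<in> simplex_interior d"
  shows "pdiff i (\<lambda>y. y i powr (real m + 1) * G y) z =
    z i powr real m * ((real m + 1) * G z + z i powr 1 * pdiff i G z)"
proof -
  have "0 < z i" using i assms(3) by (auto simp: simplex_interior_def)
  then show ?thesis
    unfolding pdiff_xpow_same[OF assms] by (simp add: powr_add algebra_simps)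
qed

lemma mult_coord_funpow_pdiff_xpow:
  assumes i: "i \<in> {1..d}"
  shows "simplex_poly d G \<Longrightarrow> y \<in> simplex_interior d \<Longrightarrow>
    y i * (pdiff i ^^ Suc m) (\<lambda>z. z i powr real m * G z) y =
    (pdiff i ^^ m) (\<lambda>z. z i powr (real m + 1) * pdiff i G z) y"
proof (induction m arbitrary: G y)
  case 0
  have "0 < y i" using i 0 by (auto simp: simplex_interior_def)
  then show ?case using pdiff_xpow_same[OF i 0, of 0] by simp
next
  case (Suc m)
  have pos: "0 < z i" if "z \<in> simplex_interior d" for z
    using i that by (auto simp: simplex_interior_def)
  have DG: "simplex_poly d (pdiff i G)" using simplex_poly_pdiff[OF Suc.prems(1)] .
  define G1 where "G1 = (\<lambda>z. (real m + 1) * G z + z i powr 1 * pdiff i G z)"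
  have G1: "simplex_poly d G1"
    unfolding G1_def by (intro simplex_poly_add simplex_poly_cmult simplex_poly_xpow[OF i] Suc.prems(1) DG)
  have pdiffs: "admissible_op d (pdiff i ^^ a)" for a
    by (intro admissible_op_funpow admissible_op_pdiff)
  have "y i * (pdiff i ^^ Suc (Suc m)) (\<lambda>z. z i powr real (Suc m) * G z) y =
      y i * (pdiff i ^^ Suc m) (\<lambda>z. z i powr real m * G1 z) y"
    unfolding funpow_Suc_apply[where m = "Suc m"]
  proof (rule arg_cong[where f = "(*) (y i)"], rule admissible_op_cong[OF pdiffs _ _ Suc.prems(2)])
    show "simplex_poly d (pdiff i (\<lambda>z. z i powr real (Suc m) * G z))"
      by (intro simplex_poly_pdiff simplex_poly_xpow[OF i] Suc.prems(1))
    show "pdiff i (\<lambda>z. z i powr real (Suc m) * G z) z = z i powr real m * G1 z"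
      if "z \<in> simplex_interior d" for z
      using pdiff_xpow_Suc[OF i Suc.prems(1) that, of m] by (simp add: G1_def add.commute)
  qed
  also have "\<dots> = (pdiff i ^^ m) (\<lambda>z. z i powr (real m + 1) * pdiff i G1 z) y"
    by (rule Suc.IH[OF G1 Suc.prems(2)])
  also have "\<dots> = (pdiff i ^^ m) (pdiff i (\<lambda>z. z i powr (real (Suc m) + 1) * pdiff i G z)) y"
  proof (rule admissible_op_cong[OF pdiffs _ _ Suc.prems(2)])
    show "simplex_poly d (\<lambda>z. z i powr (real m + 1) * pdiff i G1 z)"
      by (intro simplex_poly_xpow[OF i] simplex_poly_pdiff G1)
    fix z assume z: "z \<in> simplex_interior d"
    have "pdiff i G1 z = (real m + 1) * pdiff i G z +
        (1 * z i powr (1 - 1) * pdiff i G z + z i powr 1 * pdiff i (pdiff i G) z)"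
      unfolding G1_def
      by (simp only: pdiff_add[OF simplex_poly_cmult[OF Suc.prems(1)] simplex_poly_xpow[OF i DG] z]
          pdiff_cmult[OF Suc.prems(1) z] pdiff_xpow_same[OF i DG z])
    then show "z i powr (real m + 1) * pdiff i G1 z =
        pdiff i (\<lambda>z. z i powr (real (Suc m) + 1) * pdiff i G z) z"
      unfolding pdiff_xpow_same[OF i DG z]
      using pos[OF z] by (simp add: powr_add algebra_simps power2_eq_square)
  qed
  also have "\<dots> = (pdiff i ^^ Suc m) (\<lambda>z. z i powr (real (Suc m) + 1) * pdiff i G z) y"
    by (simp only: funpow_Suc_apply)
  finally show ?case .
qed

lemma mixed_diff_xpow_lower:
  assumes i: "i \<in> {1..d}" and n: "n i = Suc m"
    and G: "simplex_poly d G" and K: "simplex_poly d K"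
    and DG: "\<And>z. z \<in> simplex_interior d \<Longrightarrow> pdiff i G z = - a * K z"
    and x: "x \<in> simplex_interior d"
  shows "x i * mixed_diff d n (\<lambda>z. z i powr real m * G z) x =
    - a * mixed_diff d (n(i := m)) (\<lambda>z. z i powr (real m + 1) * K z) x"
proof -
  define M where "M = mixed_diff d (n(i := 0))"
  define Z where "Z = (pdiff i ^^ Suc m) (\<lambda>z. z i powr real m * G z)"
  define W where "W = (pdiff i ^^ m) (\<lambda>z. z i powr (real m + 1) * K z)"
  have pdiffs: "admissible_op d (pdiff i ^^ k)" for k
    by (intro admissible_op_funpow admissible_op_pdiff)
  have Z: "simplex_poly d Z"
    unfolding Z_def by (rule admissible_op_simplex_poly[OF pdiffs simplex_poly_xpow[OF i G]])
  have W: "simplex_poly d W"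
    unfolding W_def by (rule admissible_op_simplex_poly[OF pdiffs simplex_poly_xpow[OF i K]])
  have ZW: "z i powr 1 * Z z = - a * W z" if z: "z \<in> simplex_interior d" for z
  proof -
    have "0 < z i" using i z by (auto simp: simplex_interior_def)
    then have "z i powr 1 * Z z = (pdiff i ^^ m) (\<lambda>z. z i powr (real m + 1) * pdiff i G z) z"
      unfolding Z_def using mult_coord_funpow_pdiff_xpow[OF i G z] by simp
    also have "\<dots> = (pdiff i ^^ m) (\<lambda>z. - a * (z i powr (real m + 1) * K z)) z"
      by (rule admissible_op_cong[OF pdiffs _ _ z])
        (simp_all add: DG simplex_poly_xpow[OF i simplex_poly_pdiff[OF G]])
    also have "\<dots> = - a * W z"
      unfolding W_def by (rule admissible_op_cmult[OF pdiffs simplex_poly_xpow[OF i K] z])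
    finally show ?thesis .
  qed
  have "0 < x i" using i x by (auto simp: simplex_interior_def)
  then have "x i * mixed_diff d n (\<lambda>z. z i powr real m * G z) x = x i powr 1 * M Z x"
    unfolding M_def Z_def n[symmetric]
    using mixed_diff_pdiff_first[OF i simplex_poly_xpow[OF i G] x] by simp
  also have "\<dots> = M (\<lambda>z. z i powr 1 * Z z) x"
    unfolding M_def by (rule commutes_xpowD[OF commutes_xpow_mixed_diff[OF i] Z x, symmetric]) simp
  also have "\<dots> = M (\<lambda>z. - a * W z) x"
    unfolding M_def by (rule admissible_op_cong[OF admissible_op_mixed_diff simplex_poly_xpow[OF i Z] ZW x])
  also have "\<dots> = - a * M W x"
    unfolding M_def by (rule admissible_op_cmult[OF admissible_op_mixed_diff W x])
  also have "M W x = mixed_diff d (n(i := m)) (\<lambda>z. z i powr (real m + 1) * K z) x"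
    unfolding M_def W_def
    using mixed_diff_pdiff_first[OF i simplex_poly_xpow[OF i K] x, of "n(i := m)"] by simp
  finally show ?thesis .
qed

lemma mixed_diff_mono_eval_lower:
  assumes i: "i \<in> {1..d}" and "n i = Suc m" "e i = real m" and x: "x \<in> simplex_interior d"
  shows "x i * mixed_diff d n (mono_eval d (c, e, b)) x =
    - b * mixed_diff d (n(i := m)) (mono_eval d (c, e(i := real m + 1), b - 1)) x"
proof -
  define G where "G = mono_eval d (c, e(i := 0), b)"
  define K where "K = mono_eval d (c, e(i := 0), b - 1)"
  have G: "simplex_poly d G" and K: "simplex_poly d K"
    unfolding G_def K_def by (rule simplex_poly_mono_eval)+
  have DG: "pdiff i G z = - b * K z" if "z \<in> simplex_interior d" for z
    using pdiff_eq_poly_eval[of d G "[(c, e(i := 0), b)]", OF _ that] i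
    by (simp add: G_def K_def)
  have "x i * mixed_diff d n (\<lambda>z. z i powr real m * G z) x =
      - b * mixed_diff d (n(i := m)) (\<lambda>z. z i powr (real m + 1) * K z) x"
    by (rule mixed_diff_xpow_lower[where n = n, OF i \<open>n i = Suc m\<close> G K DG x])
  moreover have "mixed_diff d n (mono_eval d (c, e, b)) x = mixed_diff d n (\<lambda>z. z i powr real m * G z) x"
    by (rule admissible_op_cong[OF admissible_op_mixed_diff simplex_poly_mono_eval _ x])
      (simp only: G_def mono_eval_split[OF i, of _ c e b] \<open>e i = real m\<close>)
  moreover have "mixed_diff d (n(i := m)) (mono_eval d (c, e(i := real m + 1), b - 1)) x =
      mixed_diff d (n(i := m)) (\<lambda>z. z i powr (real m + 1) * K z) x"
    by (rule admissible_op_cong[OF admissible_op_mixed_diff simplex_poly_mono_eval _ x])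
      (simp only: K_def mono_eval_split[OF i, of _ c "e(i := real m + 1)"] fun_upd_same fun_upd_upd)
  ultimately show ?thesis by simp
qed

lemma simplex_P_mono_eval:
  "simplex_P d \<gamma> g n x =
    (\<Prod>k=1..d. x k powr (- \<gamma> k)) * (1 - (\<Sum>k=1..d. x k)) powr (- g) *
    mixed_diff d n (mono_eval d (1, \<lambda>k. \<gamma> k + real (n k), g + real (\<Sum>k=1..d. n k))) x"
proof -
  have "mono_eval d (1, \<lambda>k. \<gamma> k + real (n k), g + real (\<Sum>k=1..d. n k)) =
      (\<lambda>y. (\<Prod>k=1..d. y k powr (\<gamma> k + real (n k))) *
           (1 - (\<Sum>k=1..d. y k)) powr (g + real (\<Sum>k=1..d. n k)))"
    by (rule ext) simp
  then show ?thesis unfolding simplex_P_def by simp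
qed

lemma simplex_P_raise_lower:
  assumes i: "i \<in> {1..d}" and "\<gamma> i = -1" "n i = Suc m"
  shows "simplex_P d (\<gamma>(i := \<gamma> i + 2)) g (n(i := m)) x =
    x i powr (-1) * ((\<Prod>k\<in>{1..d}-{i}. x k powr (- \<gamma> k)) * (1 - (\<Sum>k=1..d. x k)) powr (- g)) *
    mixed_diff d (n(i := m))
      (mono_eval d (1, (\<lambda>k. \<gamma> k + real (n k))(i := real m + 1), g + real (\<Sum>k=1..d. n k) - 1)) x"
proof -
  have "(\<Sum>k\<in>{1..d}-{i}. (n(i := m)) k) = (\<Sum>k\<in>{1..d}-{i}. n k)"
    by (rule sum.cong) auto
  then have "g + real (\<Sum>k=1..d. (n(i := m)) k) = g + real (\<Sum>k=1..d. n k) - 1"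
    using i assms(3) by (simp add: sum.remove)
  moreover have "(\<lambda>k. (\<gamma>(i := \<gamma> i + 2)) k + real ((n(i := m)) k)) =
      (\<lambda>k. \<gamma> k + real (n k))(i := real m + 1)"
    using assms(2) by auto
  moreover have "(\<Prod>k\<in>{1..d}-{i}. x k powr (- (\<gamma>(i := \<gamma> i + 2)) k)) =
      (\<Prod>k\<in>{1..d}-{i}. x k powr (- \<gamma> k))"
    by (rule prod.cong) auto
  ultimately show ?thesis
    using i assms(2) by (simp add: simplex_P_mono_eval prod.remove add_diff_eq)
qed

theorem lemma4p2:
  fixes d i :: nat and \<gamma> :: "nat \<Rightarrow> real" and g :: real
    and n :: "nat \<Rightarrow> nat" and x :: "nat \<Rightarrow> real"
  assumes "1 \<le> i" "i \<le> d"
    and "\<gamma> i = -1"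
    and "1 \<le> n i"
    and "x \<in> simplex_interior d"
  shows "simplex_P d \<gamma> g n x =
    - (real (\<Sum>j=1..d. n j) + g) * x i *
      simplex_P d (\<gamma>(i := \<gamma> i + 2)) g (n(i := n i - 1)) x"
proof -
  have i: "i \<in> {1..d}" using assms(1,2) by simp
  obtain m where m: "n i = Suc m" using assms(4) by (cases "n i") auto
  define e where "e = (\<lambda>k. \<gamma> k + real (n k))"
  define b where "b = g + real (\<Sum>k=1..d. n k)"
  define Q where "Q = (\<Prod>k\<in>{1..d}-{i}. x k powr (- \<gamma> k)) * (1 - (\<Sum>k=1..d. x k)) powr (- g)"
  have "0 < x i" using i assms(5) by (auto simp: simplex_interior_def)
  have "e i = real m" using assms(3) m by (simp add: e_def)
  have "simplex_P d \<gamma> g n x = Q * (x i * mixed_diff d n (mono_eval d (1, e, b)) x)"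
    using i assms(3) \<open>0 < x i\<close> by (simp add: simplex_P_mono_eval Q_def e_def b_def prod.remove)
  also have "\<dots> = Q * (- b * mixed_diff d (n(i := m)) (mono_eval d (1, e(i := real m + 1), b - 1)) x)"
    by (simp only: mixed_diff_mono_eval_lower[where n = n and e = e, OF i m \<open>e i = real m\<close> assms(5)])
  also have "\<dots> = - b * x i * simplex_P d (\<gamma>(i := \<gamma> i + 2)) g (n(i := m)) x"
    using \<open>0 < x i\<close> by (simp add: simplex_P_raise_lower[where \<gamma> = \<gamma> and n = n, OF i assms(3) m] Q_def e_def b_def powr_minus)
  finally show ?thesis using m by (simp add: b_def algebra_simps)
qed

end
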